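(* Let $\mathcal C=\mathcal C(I,A,(\rho_i)_{i\in I},(C^a)_{a\in A})$ be a connected Cartan scheme and $\mathcal R=\mathcal R(\mathcal C,(R^a)_{a\in A})$ a root system of type $\mathcal C$. Let $a\in A$ and $i,j\in I$ with $i\neq j$. The following are equivalent: (1) $c^a_{ij}=c^a_{ji}=0$; (2) $R^a\cap(\mathbb N_0\alpha_i+\mathbb N_0\alpha_j)=\{\alpha_i,\alpha_j\}$; (3) $m^a_{i,j}=2$.
   Context: Let $I$ be a nonempty finite set and $\{\alpha_i\mid i\in I\}$ the standard basis of $\mathbb Z^I$; $\mathbb N_0=\{0,1,2,\dots\}$. A generalized Cartan matrix is $C=(c_{ij})_{i,j\in I}\in\mathbb Z^{I\times I}$ with $c_{ii}=2$, $c_{jk}\le0$ for $j\ne k$, and $c_{ij}=0\Rightarrow c_{ji}=0$. A Cartan scheme $\mathcal C=\mathcal C(I,A,(\rho_i)_{i\in I},(C^a)_{a\in A})$ consists of a nonempty set $A$, maps $\rho_i:A\to A$ and generalized Cartan matrices $C^a=(c^a_{jk})_{j,k\in I}$ such that (C1) $\rho_i^2=\mathrm{id}$ and (C2) $c^a_{ij}=c^{\rho_i(a)}_{ij}$ for all $a\in A$, $i,j\in I$. It is connected if the group generated by the $\rho_i$ acts transitively on $A$. For $i\in I$, $a\in A$ let $\sigma_i^a\in\mathrm{Aut}(\mathbb Z^I)$, $\sigma_i^a(\alpha_j)=\alpha_j-c^a_{ij}\alpha_i$. A root system of type $\mathcal C$ is a family $\mathcal R=\mathcal R(\mathcal C,(R^a)_{a\in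 A})$ of subsets $R^a\subset\mathbb Z^I$ such that, writing $R^a_+=R^a\cap\mathbb N_0^I$ and $m^a_{i,j}=|R^a\cap(\mathbb N_0\alpha_i+\mathbb N_0\alpha_j)|$, for all $a\in A$, $i,j\in I$: (R1) $R^a=R^a_+\cup(-R^a_+)$; (R2) $R^a\cap\mathbb Z\alpha_i=\{\alpha_i,-\alpha_i\}$; (R3) $\sigma_i^a(R^a)=R^{\rho_i(a)}$; (R4) if $i\neq j$ and $m^a_{i,j}$ is finite then $(\rho_i\rho_j)^{m^a_{i,j}}(a)=a$. *)

theory Defs
  imports Main
begin

text \<open>The index set I is modelled as a finite type 'i (I = UNIV), the set A as a type 'a
  (A = UNIV, automatically nonempty). Elements of Z^I are functions 'i => int.\<close>

definition alpha :: "'i \<Rightarrow> ('i \<Rightarrow> int)" where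
  "alpha i = (\<lambda>j. if j = i then 1 else 0)"

definition gen_cartan_matrix :: "('i \<Rightarrow> 'i \<Rightarrow> int) \<Rightarrow> bool" where
  "gen_cartan_matrix c \<longleftrightarrow>
     (\<forall>i. c i i = 2) \<and> (\<forall>j k. j \<noteq> k \<longrightarrow> c j k \<le> 0) \<and> (\<forall>i j. c i j = 0 \<longrightarrow> c j i = 0)"

definition cartan_scheme :: "('i \<Rightarrow> 'a \<Rightarrow> 'a) \<Rightarrow> ('a \<Rightarrow> 'i \<Rightarrow> 'i \<Rightarrow> int) \<Rightarrow> bool" where
  "cartan_scheme rho C \<longleftrightarrow>
     (\<forall>a. gen_cartan_matrix (C a)) \<and>
     (\<forall>i a. rho i (rho i a) = a) \<and>
     (\<forall>a i j. C a i j = C (rho i a) i j)"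

text \<open>Connected: the group generated by the involutions rho_i acts transitively on A;
  since the generators are involutions, the orbits are the classes of the reflexive
  transitive closure of the relation a ~ rho_i a.\<close>
definition connected_cs :: "('i \<Rightarrow> 'a \<Rightarrow> 'a) \<Rightarrow> bool" where
  "connected_cs rho \<longleftrightarrow> (\<forall>a b. (a, b) \<in> {(x, rho i x) | x i. True}\<^sup>*)"

text \<open>sigma_i^a is the Z-linear map with alpha_j |-> alpha_j - c^a_ij alpha_i.\<close>
definition sigma :: "('a \<Rightarrow> 'i \<Rightarrow> 'i \<Rightarrow> int) \<Rightarrow> 'i \<Rightarrow> 'a \<Rightarrow> ('i::finite \<Rightarrow> int) \<Rightarrow> ('i \<Rightarrow> int)" where
  "sigma C i a v = (\<lambda>k. v k - (if k = i then (\<Sum>j\<in>UNIV. C a i j * v j) else 0))"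

definition pos_roots :: "('a \<Rightarrow> ('i \<Rightarrow> int) set) \<Rightarrow> 'a \<Rightarrow> ('i \<Rightarrow> int) set" where
  "pos_roots R a = R a \<inter> {v. \<forall>k. 0 \<le> v k}"

definition cone2 :: "'i \<Rightarrow> 'i \<Rightarrow> ('i \<Rightarrow> int) set" where
  "cone2 i j = {v. \<exists>p q :: nat. v = (\<lambda>k. int p * alpha i k + int q * alpha j k)}"

definition root_system ::
  "('i::finite \<Rightarrow> 'a \<Rightarrow> 'a) \<Rightarrow> ('a \<Rightarrow> 'i \<Rightarrow> 'i \<Rightarrow> int) \<Rightarrow> ('a \<Rightarrow> ('i \<Rightarrow> int) set) \<Rightarrow> bool" where
  "root_system rho C R \<longleftrightarrow>
     (\<forall>a. R a = pos_roots R a \<union> uminus ` pos_roots R a) \<and>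
     (\<forall>a i. R a \<inter> {v. \<exists>n::int. v = (\<lambda>k. n * alpha i k)} = {alpha i, - alpha i}) \<and>
     (\<forall>a i. sigma C i a ` R a = R (rho i a)) \<and>
     (\<forall>a i j. i \<noteq> j \<longrightarrow> finite (R a \<inter> cone2 i j) \<longrightarrow>
        ((rho i \<circ> rho j) ^^ card (R a \<inter> cone2 i j)) a = a)"

end

theory Submission
  imports Defs
begin

text \<open>Write \<open>v = p\<alpha>\<^sub>i + q\<alpha>\<^sub>j\<close> for the elements of the cone. If \<open>c\<^sup>a\<^sub>i\<^sub>j = 0\<close>, then
  \<open>\<sigma>\<^sub>i\<^sup>a v = -p\<alpha>\<^sub>i + q\<alpha>\<^sub>j\<close> is a root, so by (R1) \<open>p\<close> and \<open>q\<close> cannot both be positive, and by (R2)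
  the only roots of the cone with \<open>p = 0\<close> or \<open>q = 0\<close> are \<open>\<alpha>\<^sub>i\<close> and \<open>\<alpha>\<^sub>j\<close>. Conversely, by (R3) applied
  at \<open>\<rho>\<^sub>i(a)\<close> and (C2), the vector \<open>\<alpha>\<^sub>j - c\<^sup>a\<^sub>i\<^sub>j\<alpha>\<^sub>i\<close> is a root of \<open>R\<^sup>a\<close>; it lies in the cone
  because \<open>c\<^sup>a\<^sub>i\<^sub>j \<le> 0\<close>, so if \<open>\<alpha>\<^sub>i, \<alpha>\<^sub>j\<close> are the only roots there, it is \<open>\<alpha>\<^sub>j\<close>.
  As \<open>\<alpha>\<^sub>i, \<alpha>\<^sub>j\<close> always lie in the cone, (2) and (3) are equivalent by counting.\<close>

definition comb2 :: "'i \<Rightarrow> 'i \<Rightarrow> int \<Rightarrow> int \<Rightarrow> ('i \<Rightarrow> int)" where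
  "comb2 i j p q = (\<lambda>k. p * alpha i k + q * alpha j k)"

lemma comb2_apply:
  assumes "i \<noteq> j"
  shows "comb2 i j p q i = p" "comb2 i j p q j = q"
  using assms by (simp_all add: comb2_def alpha_def)

lemma comb2_eq_iff: "i \<noteq> j \<Longrightarrow> comb2 i j p q = comb2 i j p' q' \<longleftrightarrow> p = p' \<and> q = q'"
  by (metis comb2_apply)

lemma alpha_eq_comb2: "alpha i = comb2 i j 1 0" "alpha j = comb2 i j 0 1"
  by (simp_all add: comb2_def)

lemma alpha_times_eq_comb2: "(\<lambda>k. q * alpha j k) = comb2 i j 0 q" "(\<lambda>k. p * alpha i k) = comb2 i j p 0"
  by (simp_all add: comb2_def)

lemma alpha_inj: "alpha i = alpha j \<longleftrightarrow> i = j"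
  by (metis alpha_def zero_neq_one)

lemma cone2_eq_comb2: "cone2 i j = {comb2 i j p q | p q. 0 \<le> p \<and> 0 \<le> q}"
proof (intro set_eqI iffI)
  fix v assume "v \<in> cone2 i j"
  then obtain p q :: nat where "v = comb2 i j (int p) (int q)"
    unfolding cone2_def comb2_def by blast
  then show "v \<in> {comb2 i j p q | p q. 0 \<le> p \<and> 0 \<le> q}" by force
next
  fix v assume "v \<in> {comb2 i j p q | p q. 0 \<le> p \<and> 0 \<le> q}"
  then obtain p q where "0 \<le> p" "0 \<le> q" "v = comb2 i j p q" by blast
  then have "v = (\<lambda>k. int (nat p) * alpha i k + int (nat q) * alpha j k)"
    by (simp add: comb2_def)
  then show "v \<in> cone2 i j" unfolding cone2_def by blast
qed

lemma cone2_commute: "cone2 i j = cone2 j i"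
proof -
  have "comb2 i j p q = comb2 j i q p" for p q by (simp add: comb2_def add.commute)
  then show ?thesis unfolding cone2_eq_comb2 by force
qed

lemma alpha_mem_cone2: "alpha i \<in> cone2 i j" "alpha j \<in> cone2 i j"
  unfolding cone2_eq_comb2 by (force intro: alpha_eq_comb2)+

lemma sigma_comb2:
  assumes "i \<noteq> j" and "C a i i = 2"
  shows "sigma C i a (comb2 i j p q) = comb2 i j (- p - C a i j * q) q"
proof -
  have "(\<Sum>l\<in>UNIV. C a i l * comb2 i j p q l)
      = (\<Sum>l\<in>UNIV. (if l = i then C a i i * p else 0) + (if l = j then C a i j * q else 0))"
    using assms(1) by (intro sum.cong) (auto simp: comb2_def alpha_def)
  also have "\<dots> = 2 * p + C a i j * q"
    using assms(2) by (simp add: sum.distrib)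
  finally show ?thesis
    using assms(1) by (auto simp: sigma_def comb2_def alpha_def)
qed

lemma cartan_scheme_diag: "cartan_scheme rho C \<Longrightarrow> C a i i = 2"
  unfolding cartan_scheme_def gen_cartan_matrix_def by blast

lemma cartan_scheme_offdiag_nonpos: "cartan_scheme rho C \<Longrightarrow> i \<noteq> j \<Longrightarrow> C a i j \<le> 0"
  unfolding cartan_scheme_def gen_cartan_matrix_def by blast

lemma cartan_scheme_rho_invariant: "cartan_scheme rho C \<Longrightarrow> C (rho i a) i j = C a i j"
  unfolding cartan_scheme_def by metis

lemma cartan_scheme_rho_involutive: "cartan_scheme rho C \<Longrightarrow> rho i (rho i a) = a"
  unfolding cartan_scheme_def by blast

lemma root_system_pos_neg: "root_system rho C R \<Longrightarrow> R a = pos_roots R a \<union> uminus ` pos_roots R a"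
  unfolding root_system_def by (drule conjunct1) (erule spec)

lemma root_system_line:
  "root_system rho C R \<Longrightarrow> R a \<inter> {v. \<exists>n::int. v = (\<lambda>k. n * alpha i k)} = {alpha i, - alpha i}"
  unfolding root_system_def by (drule conjunct2, drule conjunct1) (elim allE)

lemma root_system_sigma_image: "root_system rho C R \<Longrightarrow> sigma C i a ` R a = R (rho i a)"
  unfolding root_system_def by (drule conjunct2, drule conjunct2, drule conjunct1) (elim allE)

lemma root_system_nonneg_or_nonpos:
  assumes "root_system rho C R" and "v \<in> R a"
  shows "(\<forall>k. 0 \<le> v k) \<or> (\<forall>k. v k \<le> 0)"
proof -
  have "v \<in> pos_roots R a \<or> v \<in> uminus ` pos_roots R a"
    using assms root_system_pos_neg[OF assms(1), of a] by blast
  then show ?thesis unfolding pos_roots_def by auto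
qed

lemma root_system_multiple_alpha:
  assumes "root_system rho C R" and "(\<lambda>k. n * alpha i k) \<in> R a"
  shows "n = 1 \<or> n = -1"
proof -
  have "(\<lambda>k. n * alpha i k) \<in> R a \<inter> {v. \<exists>n::int. v = (\<lambda>k. n * alpha i k)}"
    using assms(2) by blast
  then have "(\<lambda>k. n * alpha i k) \<in> {alpha i, - alpha i}"
    by (simp only: root_system_line[OF assms(1)])
  then have "n * alpha i i \<in> {alpha i i, - alpha i i}"
    by (auto dest: fun_cong[where x = i])
  then show ?thesis by (simp add: alpha_def)
qed

lemma root_system_alpha_mem:
  assumes "root_system rho C R"
  shows "alpha i \<in> R a"
proof -
  have "alpha i \<in> R a \<inter> {v. \<exists>n::int. v = (\<lambda>k. n * alpha i k)}"
    by (simp only: root_system_line[OF assms]) simp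
  then show ?thesis by (rule IntD1)
qed

lemma simple_roots_subset_cone2: "root_system rho C R \<Longrightarrow> {alpha i, alpha j} \<subseteq> R a \<inter> cone2 i j"
  by (simp add: root_system_alpha_mem alpha_mem_cone2)

lemma roots_on_axis_cone2:
  assumes "root_system rho C R" and "i \<noteq> j" and "0 \<le> p" and "0 \<le> q"
    and "comb2 i j p q \<in> R a" and "p = 0 \<or> q = 0"
  shows "comb2 i j p q \<in> {alpha i, alpha j}"
  using assms(6)
proof
  assume "p = 0"
  then have "(\<lambda>k. q * alpha j k) \<in> R a"
    using assms(5) by (simp add: alpha_times_eq_comb2[where i = i and j = j])
  then have "q = 1"
    using root_system_multiple_alpha[OF assms(1)] \<open>0 \<le> q\<close> by fastforce
  then show ?thesis using \<open>p = 0\<close> by (simp add: alpha_eq_comb2[where i = i and j = j])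
next
  assume "q = 0"
  then have "(\<lambda>k. p * alpha i k) \<in> R a"
    using assms(5) by (simp add: alpha_times_eq_comb2[where i = i and j = j])
  then have "p = 1"
    using root_system_multiple_alpha[OF assms(1)] \<open>0 \<le> p\<close> by fastforce
  then show ?thesis using \<open>q = 0\<close> by (simp add: alpha_eq_comb2[where i = i and j = j])
qed

lemma roots_cone2_simple_if_cartan_zero:
  assumes cs: "cartan_scheme rho C" and rs: "root_system rho C R" and "i \<noteq> j"
    and "C a i j = 0"
  shows "R a \<inter> cone2 i j = {alpha i, alpha j}"
proof
  show "R a \<inter> cone2 i j \<subseteq> {alpha i, alpha j}"
  proof
    fix v assume v: "v \<in> R a \<inter> cone2 i j"
    then obtain p q where pq: "0 \<le> p" "0 \<le> q" and v_eq: "v = comb2 i j p q"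
      unfolding cone2_eq_comb2 by blast
    have "sigma C i a v = comb2 i j (- p) q"
      using sigma_comb2[where C = C and a = a, OF \<open>i \<noteq> j\<close> cartan_scheme_diag[OF cs]]
        \<open>C a i j = 0\<close> v_eq by simp
    moreover have "sigma C i a v \<in> R (rho i a)"
      using v root_system_sigma_image[OF rs, of i a] by blast
    ultimately have "(\<forall>k. 0 \<le> comb2 i j (- p) q k) \<or> (\<forall>k. comb2 i j (- p) q k \<le> 0)"
      using root_system_nonneg_or_nonpos[OF rs] by metis
    then have "0 \<le> comb2 i j (- p) q i \<or> comb2 i j (- p) q j \<le> 0"
      by blast
    then have "p = 0 \<or> q = 0"
      using pq by (simp add: comb2_apply[OF \<open>i \<noteq> j\<close>])
    then show "v \<in> {alpha i, alpha j}"
      using roots_on_axis_cone2[OF rs \<open>i \<noteq> j\<close> pq] v v_eq by blast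
  qed
qed (rule simple_roots_subset_cone2[OF rs])

lemma cartan_zero_if_roots_cone2_simple:
  assumes cs: "cartan_scheme rho C" and rs: "root_system rho C R" and "i \<noteq> j"
    and simple: "R a \<inter> cone2 i j = {alpha i, alpha j}"
  shows "C a i j = 0"
proof -
  let ?a' = "rho i a"
  have "sigma C i ?a' (alpha j) \<in> R (rho i ?a')"
    using root_system_alpha_mem[OF rs] root_system_sigma_image[OF rs] by blast
  moreover have "sigma C i ?a' (alpha j) = comb2 i j (- C a i j) 1"
    using sigma_comb2[where C = C and a = ?a', OF \<open>i \<noteq> j\<close> cartan_scheme_diag[OF cs], of 0 1]
    by (simp add: alpha_eq_comb2(2)[where i = i and j = j] cartan_scheme_rho_invariant[OF cs])
  ultimately have "comb2 i j (- C a i j) 1 \<in> R a"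
    by (simp add: cartan_scheme_rho_involutive[OF cs])
  moreover have "comb2 i j (- C a i j) 1 \<in> cone2 i j"
    using cartan_scheme_offdiag_nonpos[OF cs \<open>i \<noteq> j\<close>] unfolding cone2_eq_comb2 by force
  ultimately have "comb2 i j (- C a i j) 1 \<in> {alpha i, alpha j}"
    using simple by blast
  then show ?thesis
    by (simp add: alpha_eq_comb2[where i = i and j = j] comb2_eq_iff[OF \<open>i \<noteq> j\<close>])
qed

theorem lemma4p4:
  fixes rho :: "'i::finite \<Rightarrow> 'a \<Rightarrow> 'a"
    and C :: "'a \<Rightarrow> 'i \<Rightarrow> 'i \<Rightarrow> int"
    and R :: "'a \<Rightarrow> ('i \<Rightarrow> int) set"
    and a :: 'a and i j :: 'i
  assumes "cartan_scheme rho C" and "connected_cs rho"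
    and "root_system rho C R" and "i \<noteq> j"
  shows "((C a i j = 0 \<and> C a j i = 0) \<longleftrightarrow> R a \<inter> cone2 i j = {alpha i, alpha j})
       \<and> (R a \<inter> cone2 i j = {alpha i, alpha j} \<longleftrightarrow>
            (finite (R a \<inter> cone2 i j) \<and> card (R a \<inter> cone2 i j) = 2))"
proof -
  note cs = assms(1) and rs = assms(3)
  let ?S = "R a \<inter> cone2 i j"
  have "R a \<inter> cone2 j i = {alpha j, alpha i} \<longleftrightarrow> ?S = {alpha i, alpha j}"
    by (simp add: cone2_commute insert_commute)
  then have cartan: "(C a i j = 0 \<and> C a j i = 0) \<longleftrightarrow> ?S = {alpha i, alpha j}"
    using roots_cone2_simple_if_cartan_zero[OF cs rs \<open>i \<noteq> j\<close>]
      cartan_zero_if_roots_cone2_simple[OF cs rs \<open>i \<noteq> j\<close>]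
      cartan_zero_if_roots_cone2_simple[OF cs rs \<open>i \<noteq> j\<close>[symmetric]]
    by blast
  have "card {alpha i, alpha j} = 2"
    using \<open>i \<noteq> j\<close> by (simp add: alpha_inj)
  then have "?S = {alpha i, alpha j} \<longleftrightarrow> finite ?S \<and> card ?S = 2"
    using card_subset_eq[OF _ simple_roots_subset_cone2[OF rs]] by fastforce
  with cartan show ?thesis by blast
qed

end
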